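(* Let $K$ be a field, $V$ a finite-dimensional $K$-vector space, $W$ a $K$-subspace of $V$, and $U$ a complement of $W$ in $V$, so $V=W\oplus U$; for $u\in U$ put $W_u=W+u$. Let $\vec{v}=(v_u)_{u\in U}$ be a family of vectors in $V$ and $\vec{\varphi}=(\varphi_u)_{u\in U}$ a family of $K$-endomorphisms of $V$ with $\varphi_u(W)\subseteq W$ for all $u$. Let $f=f_{\vec{\varphi},\vec{v}}:V\to V$ be defined by $f(x)=\varphi_u(x)+v_u$ for $x\in W_u$, and let $g=g_{\vec{\varphi},\vec{v}}:U\to U$ be the unique function with $f(W_u)\subseteq W_{g(u)}$ for all $u\in U$. Then: (1) $f$ is a permutation of $V$ if and only if for every $u\in U$ the restriction of $\varphi_u$ to $W$ is an automorphism of $W$ and $g$ is a permutation of $U$. (2) $f$ is a complete mapping of $V$ if and only if for every $u\in U$ the restriction of $\varphi_u$ to $W$ is a complete automorphism of $W$ (i.e., both $\varphi_u|_W$ and $\varphi_u|_W+\operatorname{id}_W$ are automorphisms of $W$) and $g$ is a complete mapping of $U$.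
   Context: A complete mapping of an additive group $G$ is a permutation $h$ of $G$ such that $x\mapsto h(x)+x$ is also a permutation of $G$. *)

theory Defs
  imports Complex_Main
begin

definition complete_mapping_on :: "'v::ab_group_add set \<Rightarrow> ('v \<Rightarrow> 'v) \<Rightarrow> bool" where
  "complete_mapping_on A h \<longleftrightarrow> bij_betw h A A \<and> bij_betw (\<lambda>x. h x + x) A A"

definition automorphism_on ::
  "('k::field \<Rightarrow> 'v::ab_group_add \<Rightarrow> 'v) \<Rightarrow> 'v set \<Rightarrow> ('v \<Rightarrow> 'v) \<Rightarrow> bool" where
  "automorphism_on scale W h \<longleftrightarrow>
     (\<forall>x\<in>W. \<forall>y\<in>W. h (x + y) = h x + h y) \<and>
     (\<forall>c. \<forall>x\<in>W. h (scale c x) = scale c (h x)) \<and>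
     bij_betw h W W"

definition complete_automorphism_on ::
  "('k::field \<Rightarrow> 'v::ab_group_add \<Rightarrow> 'v) \<Rightarrow> 'v set \<Rightarrow> ('v \<Rightarrow> 'v) \<Rightarrow> bool" where
  "complete_automorphism_on scale W h \<longleftrightarrow>
     automorphism_on scale W h \<and> automorphism_on scale W (\<lambda>x. h x + x)"

definition coset_W :: "'v::ab_group_add set \<Rightarrow> 'v \<Rightarrow> 'v set" where
  "coset_W W u = {w + u | w. w \<in> W}"

definition comp_U :: "'v::ab_group_add set \<Rightarrow> 'v set \<Rightarrow> 'v \<Rightarrow> 'v" where
  "comp_U W U x = (THE u. u \<in> U \<and> x \<in> coset_W W u)"

definition f_map :: "'v::ab_group_add set \<Rightarrow> 'v set \<Rightarrow> ('v \<Rightarrow> 'v \<Rightarrow> 'v) \<Rightarrow> ('v \<Rightarrow> 'v) \<Rightarrow> 'v \<Rightarrow> 'v" where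
  "f_map W U \<phi> v x = \<phi> (comp_U W U x) x + v (comp_U W U x)"

definition g_map :: "'v::ab_group_add set \<Rightarrow> 'v set \<Rightarrow> ('v \<Rightarrow> 'v \<Rightarrow> 'v) \<Rightarrow> ('v \<Rightarrow> 'v) \<Rightarrow> 'v \<Rightarrow> 'v" where
  "g_map W U \<phi> v u = (THE u'. u' \<in> U \<and> f_map W U \<phi> v ` coset_W W u \<subseteq> coset_W W u')"

end

theory Submission
  imports Defs
begin

(*
  Under the identification of V with W \<times> U given by (w, u) \<mapsto> w + u, the map f becomes the
  skew product (w, u) \<mapsto> (\<phi>_u w + c_u, g u) over g, with translations c_u = f u - g u in W.
  A skew product whose fibre maps are bijections is bijective exactly when its base map is.
  Bijectivity of f makes every \<phi>_u injective on W, hence bijective since W is finite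
  dimensional; this gives (1). For (2), apply (1) to the family \<phi>_u + id, whose associated
  maps are f + id and g + id.
*)

lemma bij_betw_conj_iff:
  assumes "bij_betw \<sigma> A B" and "F ` A \<subseteq> A" and "\<And>a. a \<in> A \<Longrightarrow> f (\<sigma> a) = \<sigma> (F a)"
  shows "bij_betw f B B \<longleftrightarrow> bij_betw F A A"
proof -
  have "bij_betw f B B \<longleftrightarrow> bij_betw (f \<circ> \<sigma>) A B"
    using assms(1) by (rule bij_betw_comp_iff)
  also have "\<dots> \<longleftrightarrow> bij_betw (\<sigma> \<circ> F) A B"
    using assms(3) by (intro bij_betw_cong) simp
  also have "\<dots> \<longleftrightarrow> bij_betw F A A"
    using assms(1,2) by (rule bij_betw_comp_iff2[symmetric])
  finally show ?thesis .
qed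

lemma bij_betw_skew_product_iff:
  assumes fibres: "\<And>u. u \<in> U \<Longrightarrow> bij_betw (h u) W W" and "W \<noteq> {}"
  shows "bij_betw (\<lambda>(w, u). (h u w, g u)) (W \<times> U) (W \<times> U) \<longleftrightarrow> bij_betw g U U"
proof
  assume bij: "bij_betw (\<lambda>(w, u). (h u w, g u)) (W \<times> U) (W \<times> U)"
  obtain w0 where w0: "w0 \<in> W" using \<open>W \<noteq> {}\<close> by blast
  show "bij_betw g U U"
    unfolding bij_betw_def
  proof
    show "inj_on g U"
    proof (rule inj_onI)
      fix u1 u2 assume u: "u1 \<in> U" "u2 \<in> U" "g u1 = g u2"
      have "h u1 w0 \<in> W" using fibres[OF u(1)] w0 by (auto dest: bij_betw_imp_surj_on)
      then obtain w where "w \<in> W" "h u2 w = h u1 w0"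
        using fibres[OF u(2)] by (metis bij_betw_imp_surj_on imageE)
      then show "u1 = u2"
        using bij w0 u unfolding bij_betw_def inj_on_def by fastforce
    qed
    show "g ` U = U"
      using bij w0 unfolding bij_betw_def by (auto simp: set_eq_iff image_iff)
  qed
next
  assume g: "bij_betw g U U"
  show "bij_betw (\<lambda>(w, u). (h u w, g u)) (W \<times> U) (W \<times> U)"
    unfolding bij_betw_def
  proof
    show "inj_on (\<lambda>(w, u). (h u w, g u)) (W \<times> U)"
    proof (rule inj_onI, clarify)
      fix w1 u1 w2 u2
      assume "w1 \<in> W" "u1 \<in> U" "w2 \<in> W" "u2 \<in> U" "h u1 w1 = h u2 w2" "g u1 = g u2"
      moreover from this have "u1 = u2" using g by (simp add: bij_betw_def inj_on_def)
      ultimately show "w1 = w2 \<and> u1 = u2"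
        using fibres by (simp add: bij_betw_def inj_on_def)
    qed
    show "(\<lambda>(w, u). (h u w, g u)) ` (W \<times> U) = W \<times> U"
    proof (intro equalityI subsetI)
      fix p assume "p \<in> W \<times> U"
      then obtain w' u' where p: "p = (w', u')" "w' \<in> W" "u' \<in> U" by blast
      then obtain u where u: "u \<in> U" "u' = g u"
        using g by (metis bij_betw_imp_surj_on imageE)
      then obtain w where "w \<in> W" "w' = h u w"
        using fibres p by (metis bij_betw_imp_surj_on imageE)
      then show "p \<in> (\<lambda>(w, u). (h u w, g u)) ` (W \<times> U)"
        using p u by force
    qed (use g fibres in \<open>auto dest: bij_betw_imp_surj_on\<close>)
  qed
qed

lemma coset_W_iff: "x \<in> coset_W W u \<longleftrightarrow> x - u \<in> W"
  unfolding coset_W_def by (auto intro: exI[of _ "x - u"])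

lemma (in module) bij_betw_add_const_iff:
  assumes "subspace S" and "c \<in> S"
  shows "bij_betw (\<lambda>x. h x + c) S S \<longleftrightarrow> bij_betw h S S"
proof -
  have shift: "bij_betw (\<lambda>x. x + c) S S"
    by (rule bij_betw_byWitness[where f' = "\<lambda>x. x - c"])
      (use assms subspace_add subspace_diff in auto)
  show ?thesis
  proof
    assume bij: "bij_betw (\<lambda>x. h x + c) S S"
    have "h ` S \<subseteq> S"
    proof
      fix y assume "y \<in> h ` S"
      then obtain x where "x \<in> S" "y = h x" by blast
      then have "y = (h x + c) - c" "h x + c \<in> S"
        using bij bij_betw_imp_surj_on by fastforce+
      then show "y \<in> S" using assms subspace_diff by metis
    qed
    then show "bij_betw h S S"
      using bij bij_betw_comp_iff2[OF shift, of h S] by (simp add: comp_def)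
  next
    assume "bij_betw h S S"
    then show "bij_betw (\<lambda>x. h x + c) S S"
      using bij_betw_trans[OF _ shift] by (simp add: comp_def)
  qed
qed

lemma f_map_add_ident: "f_map W U (\<lambda>u x. \<phi> u x + x) v = (\<lambda>x. f_map W U \<phi> v x + x)"
  by (simp add: f_map_def fun_eq_iff algebra_simps)

lemma (in module) module_hom_add_ident:
  "module_hom scale scale h \<Longrightarrow> module_hom scale scale (\<lambda>x. h x + x)"
  by (simp add: module_hom_iff module_axioms scale_right_distrib add_ac)

locale direct_sum = module scale
  for scale :: "'a::comm_ring_1 \<Rightarrow> 'b::ab_group_add \<Rightarrow> 'b" +
  fixes W U :: "'b set"
  assumes W: "subspace W" and U: "subspace U"
    and compl_int: "W \<inter> U = {0}"
    and compl_sum: "{w + u | w u. w \<in> W \<and> u \<in> U} = UNIV"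
begin

lemma decompose:
  obtains w u where "w \<in> W" "u \<in> U" "x = w + u"
  using compl_sum by blast

lemma decomposition_unique:
  assumes "w1 \<in> W" "u1 \<in> U" "w2 \<in> W" "u2 \<in> U" and "w1 + u1 = w2 + u2"
  shows "w1 = w2" and "u1 = u2"
proof -
  have "w1 - w2 = u2 - u1"
    using assms(5) by (simp add: algebra_simps)
  moreover have "w1 - w2 \<in> W" "u2 - u1 \<in> U"
    using assms W U subspace_diff by blast+
  ultimately have "u2 - u1 = 0"
    using compl_int by (metis IntI singletonD)
  then show "w1 = w2" "u1 = u2"
    using \<open>w1 - w2 = u2 - u1\<close> by simp_all
qed

lemma bij_betw_add_pair: "bij_betw (\<lambda>(w, u). w + u) (W \<times> U) UNIV"
proof -
  have "inj_on (\<lambda>(w, u). w + u) (W \<times> U)"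
    by (rule inj_onI) (use decomposition_unique in auto)
  moreover have "x \<in> (\<lambda>(w, u). w + u) ` (W \<times> U)" for x
    by (rule decompose[of x]) force
  ultimately show ?thesis by (auto simp: bij_betw_def)
qed

lemma comp_U_eq: "w \<in> W \<Longrightarrow> u \<in> U \<Longrightarrow> comp_U W U (w + u) = u"
  unfolding comp_U_def coset_W_iff
proof (rule the_equality)
  fix u' assume "w \<in> W" "u \<in> U" "u' \<in> U \<and> w + u - u' \<in> W"
  then show "u' = u"
    using decomposition_unique(2)[of w u "w + u - u'" u'] by simp
qed simp

lemma comp_U_in_U: "comp_U W U x \<in> U"
  and diff_comp_U_in_W: "x - comp_U W U x \<in> W"
  by (metis decompose comp_U_eq add_diff_cancel_right')+

lemma comp_U_U: "u \<in> U \<Longrightarrow> comp_U W U u = u"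
  using comp_U_eq[of 0 u] W subspace_0 by simp

lemma comp_U_add_U: "u \<in> U \<Longrightarrow> comp_U W U (x + u) = comp_U W U x + u"
  by (rule decompose[of x]) (simp add: comp_U_eq add.assoc U subspace_add)

end

locale affine_on_cosets = direct_sum +
  fixes \<phi> :: "'b \<Rightarrow> 'b \<Rightarrow> 'b"
  assumes hom: "\<And>u. u \<in> U \<Longrightarrow> module_hom scale scale (\<phi> u)"
    and inv: "\<And>u. u \<in> U \<Longrightarrow> \<phi> u ` W \<subseteq> W"
begin

lemma f_map_add:
  assumes "w \<in> W" "u \<in> U"
  shows "f_map W U \<phi> v (w + u) = \<phi> u w + f_map W U \<phi> v u"
  using assms module_hom.add[OF hom] by (simp add: f_map_def comp_U_eq comp_U_U)

lemma g_map_eq: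
  assumes u: "u \<in> U"
  shows "g_map W U \<phi> v u = comp_U W U (f_map W U \<phi> v u)"
  unfolding g_map_def
proof (rule the_equality)
  let ?f = "f_map W U \<phi> v"
  have "?f x - comp_U W U (?f u) \<in> W" if "x - u \<in> W" for x
  proof -
    have "?f x - comp_U W U (?f u) = \<phi> u (x - u) + (?f u - comp_U W U (?f u))"
      using f_map_add[OF that u] by simp
    moreover have "\<phi> u (x - u) \<in> W"
      using that inv[OF u] by blast
    ultimately show ?thesis
      using diff_comp_U_in_W W subspace_add by metis
  qed
  then show "comp_U W U (?f u) \<in> U \<and> ?f ` coset_W W u \<subseteq> coset_W W (comp_U W U (?f u))"
    using comp_U_in_U by (simp add: image_subset_iff coset_W_iff)
next
  fix u' assume u': "u' \<in> U \<and> f_map W U \<phi> v ` coset_W W u \<subseteq> coset_W W u'"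
  have "u \<in> coset_W W u"
    using W subspace_0 by (simp add: coset_W_iff)
  then have "f_map W U \<phi> v u \<in> coset_W W u'"
    using u' by blast
  then have "f_map W U \<phi> v u - u' \<in> W"
    by (simp add: coset_W_iff)
  then show "u' = comp_U W U (f_map W U \<phi> v u)"
    using comp_U_eq[of _ u'] u' by (metis diff_add_cancel)
qed

lemma bij_f_map_imp_inj_on:
  assumes "bij (f_map W U \<phi> v)" and "u \<in> U"
  shows "inj_on (\<phi> u) W"
proof (rule inj_onI)
  fix a b assume "a \<in> W" "b \<in> W" "\<phi> u a = \<phi> u b"
  then have "f_map W U \<phi> v (a + u) = f_map W U \<phi> v (b + u)"
    using f_map_add \<open>u \<in> U\<close> by simp
  then show "a = b"
    using assms(1) by (simp add: bij_def inj_eq)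
qed

lemma bij_f_map_iff_bij_g_map:
  assumes fibres: "\<And>u. u \<in> U \<Longrightarrow> bij_betw (\<phi> u) W W"
  shows "bij (f_map W U \<phi> v) \<longleftrightarrow> bij_betw (g_map W U \<phi> v) U U"
proof -
  let ?f = "f_map W U \<phi> v" and ?g = "g_map W U \<phi> v"
  define c where "c u = ?f u - ?g u" for u
  have c: "c u \<in> W" if "u \<in> U" for u
    using that diff_comp_U_in_W by (simp add: c_def g_map_eq)
  have "bij ?f \<longleftrightarrow> bij_betw (\<lambda>(w, u). (\<phi> u w + c u, ?g u)) (W \<times> U) (W \<times> U)"
  proof (rule bij_betw_conj_iff[OF bij_betw_add_pair])
    have "\<phi> u w + c u \<in> W" "?g u \<in> U" if "w \<in> W" "u \<in> U" for w u
      using that inv[OF that(2)] c[OF that(2)] W subspace_add comp_U_in_U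
      by (auto simp: g_map_eq)
    then show "(\<lambda>(w, u). (\<phi> u w + c u, ?g u)) ` (W \<times> U) \<subseteq> W \<times> U"
      by auto
    show "?f ((\<lambda>(w, u). w + u) p) = (\<lambda>(w, u). w + u) ((\<lambda>(w, u). (\<phi> u w + c u, ?g u)) p)"
      if "p \<in> W \<times> U" for p
      using that f_map_add by (auto simp: c_def algebra_simps)
  qed
  also have "\<dots> \<longleftrightarrow> bij_betw ?g U U"
  proof (rule bij_betw_skew_product_iff)
    show "bij_betw (\<lambda>w. \<phi> u w + c u) W W" if "u \<in> U" for u
      using fibres[OF that] bij_betw_add_const_iff[OF W c[OF that]] by simp
    show "W \<noteq> {}"
      using W subspace_0 by blast
  qed
  finally show ?thesis .
qed

lemma affine_on_cosets_add_ident: "affine_on_cosets scale W U (\<lambda>u x. \<phi> u x + x)"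
proof (intro affine_on_cosets.intro affine_on_cosets_axioms.intro)
  show "direct_sum scale W U"
    by (rule direct_sum_axioms)
  show "module_hom scale scale (\<lambda>x. \<phi> u x + x)" if "u \<in> U" for u
    using hom[OF that] by (rule module_hom_add_ident)
  show "(\<lambda>x. \<phi> u x + x) ` W \<subseteq> W" if "u \<in> U" for u
    using inv[OF that] W subspace_add by blast
qed

lemma g_map_add_ident:
  assumes "u \<in> U"
  shows "g_map W U (\<lambda>u x. \<phi> u x + x) v u = g_map W U \<phi> v u + u"
proof -
  interpret add_ident: affine_on_cosets scale W U "\<lambda>u x. \<phi> u x + x"
    by (rule affine_on_cosets_add_ident)
  show ?thesis
    using assms add_ident.g_map_eq g_map_eq by (simp add: f_map_add_ident comp_U_add_U)
qed

end

lemma automorphism_on_iff_bij_betw: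
  fixes scale :: "'k::field \<Rightarrow> 'v::ab_group_add \<Rightarrow> 'v"
  assumes "module_hom scale scale h"
  shows "automorphism_on scale W h \<longleftrightarrow> bij_betw h W W"
  using module_hom.add[OF assms] module_hom.scale[OF assms] by (simp add: automorphism_on_def)

lemma (in finite_dimensional_vector_space) inj_on_subspace_imp_bij_betw:
  assumes hom: "module_hom scale scale h" and S: "subspace S"
    and into: "h ` S \<subseteq> S" and inj: "inj_on h S"
  shows "bij_betw h S S"
proof -
  interpret pair: finite_dimensional_vector_space_pair_1 scale Basis scale
    by unfold_locales (simp_all add: finite_Basis independent_Basis span_Basis)
  have "Vector_Spaces.linear scale scale h"
    using hom by (simp add: linear_iff_module_hom)
  moreover have "inj_on h (span S)"
    using inj by (simp add: span_eq_iff[THEN iffD2, OF S])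
  ultimately have "dim (h ` S) = dim S"
    by (rule pair.dim_image_eq)
  moreover have "subspace (h ` S)"
    using module_hom.subspace_image[OF hom S] .
  ultimately have "h ` S = S"
    using subspace_dim_equal[OF _ S into] by simp
  then show ?thesis
    using inj by (simp add: bij_betw_def)
qed

locale fd_affine_on_cosets = affine_on_cosets scale W U \<phi> + finite_dimensional_vector_space scale B
  for scale :: "'k::field \<Rightarrow> 'v::ab_group_add \<Rightarrow> 'v" and W U \<phi> B
begin

lemma bij_f_map_iff:
  "bij (f_map W U \<phi> v) \<longleftrightarrow>
    (\<forall>u\<in>U. automorphism_on scale W (\<phi> u)) \<and> bij_betw (g_map W U \<phi> v) U U"
proof -
  have "(\<forall>u\<in>U. automorphism_on scale W (\<phi> u)) \<longleftrightarrow> (\<forall>u\<in>U. bij_betw (\<phi> u) W W)"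
    using automorphism_on_iff_bij_betw[OF hom] by simp
  moreover have "\<forall>u\<in>U. bij_betw (\<phi> u) W W" if "bij (f_map W U \<phi> v)"
    using inj_on_subspace_imp_bij_betw[OF hom W inv] bij_f_map_imp_inj_on[OF that] by simp
  ultimately show ?thesis
    using bij_f_map_iff_bij_g_map by metis
qed

lemma complete_mapping_f_map_iff:
  "complete_mapping_on UNIV (f_map W U \<phi> v) \<longleftrightarrow>
    (\<forall>u\<in>U. complete_automorphism_on scale W (\<phi> u)) \<and> complete_mapping_on U (g_map W U \<phi> v)"
proof -
  interpret add_ident: fd_affine_on_cosets scale W U "\<lambda>u x. \<phi> u x + x" B
    by (intro fd_affine_on_cosets.intro affine_on_cosets_add_ident) unfold_locales
  have "bij_betw (g_map W U (\<lambda>u x. \<phi> u x + x) v) U U \<longleftrightarrow>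
      bij_betw (\<lambda>u. g_map W U \<phi> v u + u) U U"
    using g_map_add_ident by (rule bij_betw_cong)
  then show ?thesis
    using bij_f_map_iff add_ident.bij_f_map_iff
    unfolding complete_mapping_on_def complete_automorphism_on_def f_map_add_ident by blast
qed

end

theorem proposition4p1:
  fixes scale :: "'k::field \<Rightarrow> 'v::ab_group_add \<Rightarrow> 'v"
    and W U :: "'v set"
    and \<phi> :: "'v \<Rightarrow> 'v \<Rightarrow> 'v"
    and v :: "'v \<Rightarrow> 'v"
  assumes fin: "\<exists>B. finite_dimensional_vector_space scale B"
    and W: "module.subspace scale W"
    and U: "module.subspace scale U"
    and compl_int: "W \<inter> U = {0}"
    and compl_sum: "{w + u | w u. w \<in> W \<and> u \<in> U} = UNIV"
    and lin: "\<And>u. u \<in> U \<Longrightarrow> Vector_Spaces.linear scale scale (\<phi> u)"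
    and inv: "\<And>u. u \<in> U \<Longrightarrow> \<phi> u ` W \<subseteq> W"
  shows "(bij (f_map W U \<phi> v) \<longleftrightarrow>
            (\<forall>u\<in>U. automorphism_on scale W (\<phi> u)) \<and> bij_betw (g_map W U \<phi> v) U U)
       \<and> (complete_mapping_on UNIV (f_map W U \<phi> v) \<longleftrightarrow>
            (\<forall>u\<in>U. complete_automorphism_on scale W (\<phi> u)) \<and>
            complete_mapping_on U (g_map W U \<phi> v))"
proof -
  obtain B where fd: "finite_dimensional_vector_space scale B"
    using fin by blast
  then interpret finite_dimensional_vector_space scale B .
  have hom: "module_hom scale scale (\<phi> u)" if "u \<in> U" for u
    using lin[OF that] by (simp add: linear_iff_module_hom)
  interpret fd_affine_on_cosets scale W U \<phi> B
    by (intro fd_affine_on_cosets.intro affine_on_cosets.intro affine_on_cosets_axioms.intro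
        direct_sum.intro direct_sum_axioms.intro)
      (fact fd module_axioms hom inv W U compl_int compl_sum)+
  show ?thesis
    using bij_f_map_iff complete_mapping_f_map_iff by blast
qed

end
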